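(* Let $G$ and $H$ be word-representable graphs with representation numbers $k_1$ and $k_2$, respectively. Then $G\,\square\,H$ is $(k_1 + k_2 + \min\{|G|,|H|\})$-representable.
   Context: All graphs are simple and undirected; $|G|$ denotes the number of vertices of $G$. Letters $x,y$ alternate in a word $w$ if deleting all other letters from $w$ yields $xyxy\ldots$ or $yxyx\ldots$ (of either parity). A word $w$ over $V(G)$ represents $G$ if every vertex occurs in $w$ and for all distinct $x,y$, $xy\in E(G)$ iff $x,y$ alternate in $w$. A word is $k$-uniform if each of its letters occurs exactly $k$ times; $G$ is $k$-representable if it is represented by some $k$-uniform word; the representation number of a word-representable graph $G$ is the least $k$ such that $G$ is $k$-representable. The Cartesian product $G\,\square\,H$ has vertex set $V(G)\times V(H)$, with $(u,v)$ adjacent to $(u',v')$ iff either $u=u'$ and $vv'\in E(H)$, or $v=v'$ and $uu'\in E(G)$. *)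

theory Defs
  imports Main
begin

definition simple_graph :: "'a set \<Rightarrow> ('a \<Rightarrow> 'a \<Rightarrow> bool) \<Rightarrow> bool" where
  "simple_graph V E \<longleftrightarrow> finite V \<and> (\<forall>x y. E x y \<longrightarrow> x \<in> V \<and> y \<in> V)
     \<and> (\<forall>x y. E x y \<longrightarrow> E y x) \<and> (\<forall>x. \<not> E x x)"

fun no_adj_repeat :: "'a list \<Rightarrow> bool" where
  "no_adj_repeat [] = True"
| "no_adj_repeat [a] = True"
| "no_adj_repeat (a # b # xs) = (a \<noteq> b \<and> no_adj_repeat (b # xs))"

definition alternate :: "'a list \<Rightarrow> 'a \<Rightarrow> 'a \<Rightarrow> bool" where
  "alternate w x y \<longleftrightarrow> no_adj_repeat (filter (\<lambda>z. z = x \<or> z = y) w)"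

definition represents :: "'a list \<Rightarrow> 'a set \<Rightarrow> ('a \<Rightarrow> 'a \<Rightarrow> bool) \<Rightarrow> bool" where
  "represents w V E \<longleftrightarrow> set w = V \<and>
     (\<forall>x\<in>V. \<forall>y\<in>V. x \<noteq> y \<longrightarrow> (E x y \<longleftrightarrow> alternate w x y))"

definition uniform :: "nat \<Rightarrow> 'a list \<Rightarrow> bool" where
  "uniform k w \<longleftrightarrow> (\<forall>x\<in>set w. count_list w x = k)"

definition k_representable :: "nat \<Rightarrow> 'a set \<Rightarrow> ('a \<Rightarrow> 'a \<Rightarrow> bool) \<Rightarrow> bool" where
  "k_representable k V E \<longleftrightarrow> (\<exists>w. uniform k w \<and> represents w V E)"

definition word_representable :: "'a set \<Rightarrow> ('a \<Rightarrow> 'a \<Rightarrow> bool) \<Rightarrow> bool" where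
  "word_representable V E \<longleftrightarrow> (\<exists>w. represents w V E)"

definition representation_number :: "'a set \<Rightarrow> ('a \<Rightarrow> 'a \<Rightarrow> bool) \<Rightarrow> nat" where
  "representation_number V E = (LEAST k. k_representable k V E)"

definition cart_V :: "'a set \<Rightarrow> 'b set \<Rightarrow> ('a \<times> 'b) set" where
  "cart_V VG VH = VG \<times> VH"

definition cart_E :: "('a \<Rightarrow> 'a \<Rightarrow> bool) \<Rightarrow> ('b \<Rightarrow> 'b \<Rightarrow> bool)
    \<Rightarrow> ('a \<times> 'b) \<Rightarrow> ('a \<times> 'b) \<Rightarrow> bool" where
  "cart_E EG EH = (\<lambda>(u, v) (u', v'). (u = u' \<and> EH v v') \<or> (v = v' \<and> EG u u'))"

end

theory Submission
  imports Defs
begin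

(*
  Let w1 and w2 be uniform representations of G and H with k1 and k2 copies of each letter, and
  let P1 and P2 list the vertices of G and H in order of last occurrence, n = |G|.  In w1 replace
  every letter u by the row (u, v), v in P2, in w2 every letter v by the column (u, v), u in P1,
  and put between the two results a word on the n-by-|H| grid in which every vertex occurs n
  times and whose restriction to any row or column is n copies of it in order.  The order of last
  occurrences also tells with which letter an alternating pair of w1 or w2 starts, so for two
  vertices in a common row all three parts alternate in the same phase, the last one iff the
  vertices are adjacent in H; symmetrically for columns.  For vertices in different rows and
  columns the outer parts alternate only if both projections are edges, and then either the
  middle part breaks the alternation or the outer parts are out of phase.  Every vertex occurs
  k1 + k2 + n times; taking G to be the smaller factor gives the bound.
*)

lemma count_list_filter: "count_list (filter P xs) x = (if P x then count_list xs x else 0)"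
  by (induction xs) auto

lemma count_list_distinct: "distinct xs \<Longrightarrow> x \<in> set xs \<Longrightarrow> count_list xs x = 1"
  by (induction xs) auto

lemma count_list_concat_replicate: "count_list (concat (replicate n xs)) x = n * count_list xs x"
  by (induction n) auto

lemma filter_eq_singleton: "distinct xs \<Longrightarrow> x \<in> set xs \<Longrightarrow> filter (\<lambda>z. z = x) xs = [x]"
  by (induction xs) (auto simp: filter_empty_conv)

lemma filter_nth_pair:
  assumes "distinct xs" "i < j" "j < length xs"
  shows "filter (\<lambda>z. z = xs ! i \<or> z = xs ! j) xs = [xs ! i, xs ! j]"
  using assms
proof (induction xs arbitrary: i j)
  case (Cons a xs)
  then obtain j' where j: "j = Suc j'" "j' < length xs" by (cases j) auto
  show ?case
  proof (cases i)
    case 0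
    have "filter (\<lambda>z. z = a \<or> z = xs ! j') xs = filter (\<lambda>z. z = xs ! j') xs"
      using Cons.prems(1) by (intro filter_cong) auto
    then show ?thesis using 0 j Cons.prems(1) filter_eq_singleton[of xs "xs ! j'"] by simp
  next
    case (Suc i')
    then have "a \<noteq> xs ! i'" "a \<noteq> xs ! j'" using Cons.prems j by (auto simp: nth_mem)
    then show ?thesis using Cons.IH[of i' j'] Cons.prems j Suc by simp
  qed
qed simp

lemma concat_map_replicate:
  "concat (map (\<lambda>s. concat (replicate (c s) xs)) ys) = concat (replicate (sum_list (map c ys)) xs)"
  by (induction ys) (simp_all add: replicate_add)

lemma concat_map_if_eq:
  "concat (map (\<lambda>b. if b = a then xs else []) ys) = concat (replicate (count_list ys a) xs)"
  by (induction ys) auto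

lemma concat_map_if_pair:
  "concat (map (\<lambda>b. if b = a then [p] else if b = a' then [q] else []) xs)
     = map (\<lambda>b. if b = a then p else q) (filter (\<lambda>b. b = a \<or> b = a') xs)"
  by (induction xs) auto

section \<open>Alternating words\<close>

fun alt_word :: "'a \<Rightarrow> 'a \<Rightarrow> nat \<Rightarrow> 'a list" where
  "alt_word x y 0 = []"
| "alt_word x y (Suc n) = x # alt_word y x n"

lemma length_alt_word [simp]: "length (alt_word x y n) = n"
  by (induction n arbitrary: x y) auto

lemma set_alt_word: "set (alt_word x y n) \<subseteq> {x, y}"
  by (induction n arbitrary: x y) auto

lemma map_alt_word: "map f (alt_word x y n) = alt_word (f x) (f y) n"
  by (induction n arbitrary: x y) auto

lemma count_alt_word:
  assumes "x \<noteq> y"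
  shows "count_list (alt_word x y n) x = (n + 1) div 2" "count_list (alt_word x y n) y = n div 2"
  using assms by (induction n arbitrary: x y) auto

lemma alt_word_double: "alt_word x y (2 * k) = concat (replicate k [x, y])"
  by (induction k) auto

lemma alt_word_double_append:
  "alt_word x y (2 * k) @ alt_word x y (2 * l) = alt_word x y (2 * (k + l))"
  unfolding alt_word_double by (simp add: replicate_add)

lemma last_alt_word: "n \<noteq> 0 \<Longrightarrow> last (alt_word x y n) = (if odd n then x else y)"
proof (induction n arbitrary: x y)
  case (Suc n) then show ?case by (cases n) auto
qed simp

lemma remdups_alt_word_double: "x \<noteq> y \<Longrightarrow> 0 < k \<Longrightarrow> remdups (alt_word x y (2 * k)) = [x, y]"
proof (induction k)
  case (Suc k)
  then show ?case by (cases k) (auto simp: numeral_2_eq_2)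
qed simp

lemma filter_nth_pair_concat_replicate:
  assumes "distinct xs" "i < j" "j < length xs"
  shows "filter (\<lambda>z. z = xs ! i \<or> z = xs ! j) (concat (replicate n xs)) = alt_word (xs ! i) (xs ! j) (2 * n)"
  using filter_nth_pair[OF assms] by (simp add: filter_concat alt_word_double)

lemma no_adj_repeat_Cons: "no_adj_repeat (a # xs) \<longleftrightarrow> no_adj_repeat xs \<and> (xs \<noteq> [] \<longrightarrow> a \<noteq> hd xs)"
  by (cases xs) auto

lemma no_adj_repeat_append:
  "no_adj_repeat (xs @ ys) \<longleftrightarrow>
     no_adj_repeat xs \<and> no_adj_repeat ys \<and> (xs \<noteq> [] \<longrightarrow> ys \<noteq> [] \<longrightarrow> last xs \<noteq> hd ys)"
  by (induction xs rule: no_adj_repeat.induct) (auto simp: no_adj_repeat_Cons)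

lemma no_adj_repeat_append3:
  "no_adj_repeat (xs @ ys @ zs) \<Longrightarrow> no_adj_repeat xs \<and> no_adj_repeat ys \<and> no_adj_repeat zs"
  by (simp add: no_adj_repeat_append)

lemma no_adj_repeat_map: "inj_on f (set xs) \<Longrightarrow> no_adj_repeat (map f xs) \<longleftrightarrow> no_adj_repeat xs"
  by (induction xs rule: no_adj_repeat.induct) (auto simp: inj_on_def)

lemma no_adj_repeat_alt_word: "x \<noteq> y \<Longrightarrow> no_adj_repeat (alt_word x y n)"
proof (induction n arbitrary: x y)
  case (Suc n) then show ?case by (cases n) auto
qed simp

lemma no_adj_repeat_alt_word_append3:
  "x \<noteq> y \<Longrightarrow> no_adj_repeat (alt_word x y (2 * k) @ alt_word x y (2 * l) @ alt_word x y (2 * r))"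
  unfolding alt_word_double_append by (rule no_adj_repeat_alt_word)

lemma no_adj_repeat_imp_alt_word:
  assumes "no_adj_repeat xs" "set xs \<subseteq> {x, y}"
  shows "xs = alt_word x y (length xs) \<or> xs = alt_word y x (length xs)"
  using assms
proof (induction xs)
  case (Cons a xs)
  then have "xs = alt_word x y (length xs) \<or> xs = alt_word y x (length xs)"
    by (simp add: no_adj_repeat_Cons)
  with Cons.prems show ?case
    by (cases xs) (auto simp: no_adj_repeat_Cons)
qed simp

lemma length_balanced:
  assumes "set xs \<subseteq> {x, y}" "x \<noteq> y" "count_list xs x = count_list xs y"
  shows "length xs = 2 * count_list xs x"
  using sum_count_set[OF assms(1)] assms(2,3) by simp

lemma balanced_no_adj_repeat_imp_alt_word:
  assumes "no_adj_repeat xs" "set xs \<subseteq> {x, y}" "x \<noteq> y" "count_list xs x = count_list xs y"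
  shows "xs = alt_word x y (2 * count_list xs x) \<or> xs = alt_word y x (2 * count_list xs x)"
  using no_adj_repeat_imp_alt_word[OF assms(1,2)] length_balanced[OF assms(2-4)] by simp

lemma not_no_adj_repeat_opposite_ends:
  assumes "x \<noteq> y" "0 < k" "0 < l" "set xs \<subseteq> {x, y}" "count_list xs x = count_list xs y"
  shows "\<not> no_adj_repeat (alt_word x y (2 * k) @ xs @ alt_word y x (2 * l))"
proof
  let ?w = "alt_word x y (2 * k) @ xs @ alt_word y x (2 * l)"
  define N where "N = length ?w"
  assume "no_adj_repeat ?w"
  moreover have "set ?w \<subseteq> {x, y}" using set_alt_word assms(4) by fastforce
  ultimately have "?w = alt_word x y N \<or> ?w = alt_word y x N"
    unfolding N_def by (rule no_adj_repeat_imp_alt_word)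
  moreover have "hd ?w = x" using assms(2) by (cases k) simp_all
  moreover have N: "N \<noteq> 0" "even N"
    using length_balanced[OF assms(4,1,5)] assms(2) by (auto simp: N_def)
  moreover have "hd (alt_word y x N) = y" using N(1) by (cases N) simp_all
  ultimately have "last ?w = y" using assms(1) last_alt_word[of N x y] by force
  moreover have "last ?w = x"
    using assms(3) last_alt_word[of "2 * l" y x] by (auto simp flip: length_0_conv)
  ultimately show False using assms(1) by simp
qed

lemma no_adj_repeat_append_minority:
  assumes "no_adj_repeat xs" "set xs \<subseteq> {x, y}" "x \<noteq> y" "count_list xs x < count_list xs y"
  shows "no_adj_repeat (xs @ [x])"
proof -
  define L where "L = length xs"
  have "xs \<noteq> alt_word x y L"
    using count_alt_word[OF assms(3), of L] assms(4) by auto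
  then have xs: "xs = alt_word y x L"
    using no_adj_repeat_imp_alt_word[OF assms(1,2)] unfolding L_def by blast
  then have "odd L" using count_alt_word[OF assms(3)[symmetric], of L] assms(4) by auto
  then have "xs \<noteq> [] \<and> last xs = y"
    using xs last_alt_word[of L y x] odd_pos by (auto simp flip: length_0_conv)
  then show ?thesis using assms(1,3) by (simp add: no_adj_repeat_append)
qed

lemma no_adj_repeat_append_distinct_pair:
  assumes "no_adj_repeat xs" "xs \<noteq> []" "distinct ys" "set ys = {x, y}" "x \<noteq> y" "last ys = last xs"
  shows "no_adj_repeat (xs @ ys)"
proof -
  obtain d where "ys = [d, last xs]" "d \<noteq> last xs"
    using assms(3-6) distinct_card[of ys] by (cases ys rule: remdups_adj.cases) auto
  then show ?thesis using assms(1,2) by (simp add: no_adj_repeat_append)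
qed

section \<open>Uniform representations\<close>

lemma alternate_commute: "alternate w x y \<longleftrightarrow> alternate w y x"
  unfolding alternate_def by (metis (no_types, lifting) disj_commute filter_cong)

(* remdups orders the letters by last occurrence; for an alternating pair occurring equally
   often this is also the order of first occurrence. *)
lemma filter_uniform_alternate:
  assumes "uniform k w" "alternate w x y"
    and "i < j" "j < length (remdups w)" "x = remdups w ! i" "y = remdups w ! j"
  shows "filter (\<lambda>z. z = x \<or> z = y) w = alt_word x y (2 * k)"
proof -
  define F where "F = filter (\<lambda>z. z = x \<or> z = y) w"
  have "x \<noteq> y" using assms(3-6) by (simp add: nth_eq_iff_index_eq)
  have "x \<in> set w" "y \<in> set w" using assms(3-6) nth_mem[of _ "remdups w"] by auto
  then have "count_list w x = k" "count_list w y = k" using assms(1) by (auto simp: uniform_def)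
  then have counts: "count_list F x = k" "count_list F y = k" and "0 < k"
    using \<open>x \<in> set w\<close> count_list_0_iff[of w x] by (auto simp: F_def count_list_filter)
  have "F = alt_word x y (2 * k) \<or> F = alt_word y x (2 * k)"
    using balanced_no_adj_repeat_imp_alt_word[of F x y] assms(2) \<open>x \<noteq> y\<close> counts
    unfolding F_def alternate_def by auto
  moreover have "F \<noteq> alt_word y x (2 * k)"
  proof
    assume "F = alt_word y x (2 * k)"
    then have "remdups F = [y, x]" using remdups_alt_word_double[of y x k] \<open>x \<noteq> y\<close> \<open>0 < k\<close> by simp
    moreover have "remdups F = [x, y]"
      using filter_nth_pair[of "remdups w" i j] assms(3-6) by (simp add: F_def remdups_filter)
    ultimately show False using \<open>x \<noteq> y\<close> by simp
  qed
  ultimately show ?thesis by (simp add: F_def)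
qed

(* Appending the deficient letters in the order of their last occurrences (the order kept by
   remdups) cannot create a repetition between two alternating letters. *)
definition pad :: "nat \<Rightarrow> 'a list \<Rightarrow> 'a list" where
  "pad K w = w @ filter (\<lambda>z. count_list w z < K) (remdups w)"

lemma set_pad [simp]: "set (pad K w) = set w"
  by (auto simp: pad_def)

lemma count_list_pad:
  "z \<in> set w \<Longrightarrow> count_list (pad K w) z = count_list w z + (if count_list w z < K then 1 else 0)"
  by (simp add: pad_def count_list_filter count_list_distinct)

lemma alternate_pad:
  assumes "x \<noteq> y" "x \<in> set w" "y \<in> set w"
  shows "alternate (pad K w) x y \<longleftrightarrow> alternate w x y"
proof -
  let ?Q = "\<lambda>z. z = x \<or> z = y" and ?C = "\<lambda>z. count_list w z < K"
  define F where "F = filter ?Q w"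
  define D where "D = filter (\<lambda>z. ?Q z \<and> ?C z) (remdups w)"
  have "filter ?Q (pad K w) = F @ D"
    by (simp add: pad_def F_def D_def filter_filter conj_commute)
  moreover have "no_adj_repeat (F @ D) \<longleftrightarrow> no_adj_repeat F"
  proof
    assume nF: "no_adj_repeat F"
    have sF: "set F \<subseteq> {x, y}" "set F \<subseteq> {y, x}" by (auto simp: F_def)
    have cF: "count_list F x = count_list w x" "count_list F y = count_list w y"
      by (simp_all add: F_def count_list_filter)
    consider "?C x" "?C y" | "?C x" "\<not> ?C y" | "\<not> ?C x" "?C y" | "\<not> ?C x" "\<not> ?C y" by blast
    then show "no_adj_repeat (F @ D)"
    proof cases
      case 1
      then have "D = filter ?Q (remdups w)" unfolding D_def by (intro filter_cong) auto
      then have D: "distinct D" "set D = {x, y}" "last D = last F"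
        using assms remdups_filter_last[of ?Q w] by (auto simp: F_def)
      have "F \<noteq> []" using assms(2) by (auto simp: F_def filter_empty_conv)
      then show ?thesis by (rule no_adj_repeat_append_distinct_pair[OF nF _ D(1,2) assms(1) D(3)])
    next
      case 2
      then have "D = filter (\<lambda>z. z = x) (remdups w)" unfolding D_def by (intro filter_cong) auto
      then have "D = [x]" using assms(2) filter_eq_singleton[of "remdups w" x] by simp
      then show ?thesis using no_adj_repeat_append_minority[OF nF sF(1) assms(1)] 2 cF by simp
    next
      case 3
      then have "D = filter (\<lambda>z. z = y) (remdups w)" unfolding D_def by (intro filter_cong) auto
      then have "D = [y]" using assms(3) filter_eq_singleton[of "remdups w" y] by simp
      then show ?thesis
        using no_adj_repeat_append_minority[OF nF sF(2) assms(1)[symmetric]] 3 cF by simp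
    next
      case 4
      then have "D = []" unfolding D_def by (auto simp: filter_empty_conv)
      then show ?thesis using nF by simp
    qed
  qed (simp add: no_adj_repeat_append)
  ultimately show ?thesis by (simp add: alternate_def F_def)
qed

lemma represents_pad: "represents w V E \<Longrightarrow> represents (pad K w) V E"
  unfolding represents_def by (simp add: alternate_pad)

lemma represents_funpow_pad: "represents w V E \<Longrightarrow> represents ((pad K ^^ j) w) V E"
  by (induction j) (simp_all add: represents_pad)

lemma set_funpow_pad [simp]: "set ((pad K ^^ j) w) = set w"
  by (induction j) simp_all

lemma count_list_funpow_pad:
  assumes "\<forall>z\<in>set w. count_list w z \<le> K" "z \<in> set w"
  shows "count_list ((pad K ^^ j) w) z = min K (count_list w z + j)"
proof (induction j)
  case (Suc j)
  then show ?case using assms(2) by (simp add: count_list_pad)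
qed (use assms in simp)

lemma represents_imp_k_representable: "represents w V E \<Longrightarrow> k_representable (length w) V E"
proof -
  assume rep: "represents w V E"
  let ?w = "(pad (length w) ^^ length w) w"
  have "uniform (length w) ?w"
    unfolding uniform_def using count_list_funpow_pad[of w "length w"] by (simp add: count_le_length)
  moreover have "represents ?w V E" using rep by (rule represents_funpow_pad)
  ultimately show ?thesis unfolding k_representable_def by blast
qed

lemma k_representable_representation_number:
  "word_representable V E \<Longrightarrow> k_representable (representation_number V E) V E"
  unfolding representation_number_def word_representable_def
  using represents_imp_k_representable by (metis LeastI_ex)

section \<open>Blowing up a word by a list\<close>

definition blowup :: "'a list \<Rightarrow> 'b list \<Rightarrow> ('a \<times> 'b) list" where
  "blowup w P = concat (map (\<lambda>u. map (Pair u) P) w)"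

lemma set_blowup [simp]: "set (blowup w P) = set w \<times> set P"
  by (auto simp: blowup_def)

lemma count_list_blowup:
  "distinct P \<Longrightarrow> v \<in> set P \<Longrightarrow> count_list (blowup w P) (u, v) = count_list w u"
proof (induction w)
  case (Cons a w)
  have "count_list (map (Pair a) P) (u, v) = (if a = u then 1 else 0)"
    using Cons.prems count_list_map_conv[of "Pair u" P v] count_list_distinct[of P v]
    by (auto simp: inj_def count_list_0_iff)
  then show ?case using Cons by (simp add: blowup_def)
qed (simp add: blowup_def)

lemma filter_blowup_same_letter:
  assumes "distinct P" "a < b" "b < length P"
  shows "filter (\<lambda>z. z = (u, P ! a) \<or> z = (u, P ! b)) (blowup w P)
           = alt_word (u, P ! a) (u, P ! b) (2 * count_list w u)"
proof -
  have "filter (\<lambda>v. v = P ! a \<or> v = P ! b) P = [P ! a, P ! b]"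
    using filter_nth_pair[OF assms] .
  then have "filter (\<lambda>z. z = (u, P ! a) \<or> z = (u, P ! b)) (blowup w P)
      = concat (replicate (count_list w u) [(u, P ! a), (u, P ! b)])"
    by (induction w) (simp_all add: blowup_def filter_map o_def)
  then show ?thesis by (simp add: alt_word_double)
qed

lemma filter_blowup_distinct_letters:
  assumes "distinct P" "v \<in> set P" "v' \<in> set P" "u \<noteq> u'"
  shows "filter (\<lambda>z. z = (u, v) \<or> z = (u', v')) (blowup w P)
           = map (\<lambda>z. if z = u then (u, v) else (u', v')) (filter (\<lambda>z. z = u \<or> z = u') w)"
  using assms filter_eq_singleton[OF assms(1)]
  by (induction w) (auto simp: blowup_def filter_map o_def)

lemma no_adj_repeat_filter_blowup:
  assumes "distinct P" "v \<in> set P" "v' \<in> set P" "u \<noteq> u'"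
  shows "no_adj_repeat (filter (\<lambda>z. z = (u, v) \<or> z = (u', v')) (blowup w P)) \<longleftrightarrow> alternate w u u'"
  unfolding filter_blowup_distinct_letters[OF assms] alternate_def
  using assms(4) by (intro no_adj_repeat_map) (auto simp: inj_on_def)

lemma filter_blowup_uniform_alternate:
  assumes "distinct P" "v \<in> set P" "v' \<in> set P"
    and "uniform k w" "alternate w u u'"
    and "i < j" "j < length (remdups w)" "u = remdups w ! i" "u' = remdups w ! j"
  shows "filter (\<lambda>z. z = (u, v) \<or> z = (u', v')) (blowup w P) = alt_word (u, v) (u', v') (2 * k)"
proof -
  have "u \<noteq> u'" using assms(6-9) by (simp add: nth_eq_iff_index_eq)
  then have "filter (\<lambda>z. z = (u, v) \<or> z = (u', v')) (blowup w P)
      = map (\<lambda>z. if z = u then (u, v) else (u', v')) (alt_word u u' (2 * k))"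
    using filter_blowup_distinct_letters[OF assms(1-3) \<open>u \<noteq> u'\<close>, of w]
      filter_uniform_alternate[OF assms(4-9)]
    by simp
  then show ?thesis using \<open>u \<noteq> u'\<close> by (simp add: map_alt_word)
qed

section \<open>A word on the grid\<close>

definition cyclic_after :: "nat \<Rightarrow> nat \<Rightarrow> nat list" where
  "cyclic_after n s = [Suc s..<n] @ [0..<Suc s]"

lemma set_cyclic_after: "s < n \<Longrightarrow> set (cyclic_after n s) = {..<n}"
  by (auto simp: cyclic_after_def)

lemma distinct_cyclic_after: "distinct (cyclic_after n s)"
  by (auto simp: cyclic_after_def)

(* Starting the columns of stage s after row s makes every column of grid_word read as n
   consecutive copies of itself (concat_cyclic_after). *)
definition grid_col :: "nat \<Rightarrow> nat \<Rightarrow> nat \<Rightarrow> (nat \<times> nat) list" where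
  "grid_col n m s = concat (map (\<lambda>b. map (\<lambda>j. (j, b)) (cyclic_after n s)) [0..<m])"

definition grid_stage :: "nat \<Rightarrow> nat \<Rightarrow> nat \<Rightarrow> (nat \<times> nat) list" where
  "grid_stage n m s = map (Pair s) [0..<m] @ (if Suc s < n then grid_col n m s else [])"

definition grid_word :: "nat \<Rightarrow> nat \<Rightarrow> (nat \<times> nat) list" where
  "grid_word n m = concat (map (grid_stage n m) [0..<n])"

lemma set_grid_word: "set (grid_word n m) \<subseteq> {..<n} \<times> {..<m}"
  by (auto simp: grid_word_def grid_stage_def grid_col_def cyclic_after_def)

lemma sum_list_stage_count:
  assumes "i < n"
  shows "(\<Sum>s\<leftarrow>[0..<n]. of_bool (s = i) + of_bool (Suc s < n)) = (n :: nat)"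
proof -
  have "{0..<n} \<inter> {s. s = i} = {i}" "{0..<n} \<inter> {s. Suc s < n} = {0..<n - 1}"
    using assms by auto
  then show ?thesis
    using assms by (simp add: sum_list_addf sum_set_upt_conv_sum_list_nat[symmetric])
qed

lemma filter_fst_grid_stage:
  assumes "i < n"
  shows "filter (\<lambda>z. fst z = i) (grid_stage n m s)
           = concat (replicate (of_bool (s = i) + of_bool (Suc s < n)) (map (Pair i) [0..<m]))"
proof -
  have "filter (\<lambda>j. j = i) (cyclic_after n s) = [i]"
    using assms by (intro filter_eq_singleton) (auto simp: distinct_cyclic_after cyclic_after_def)
  then have "filter (\<lambda>z. fst z = i) (grid_col n m s) = map (Pair i) [0..<m]"
    by (simp add: grid_col_def filter_concat filter_map o_def concat_map_singleton)
  then show ?thesis by (simp add: grid_stage_def filter_map o_def replicate_add)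
qed

lemma filter_fst_grid_word:
  assumes "i < n"
  shows "filter (\<lambda>z. fst z = i) (grid_word n m) = concat (replicate n (map (Pair i) [0..<m]))"
  using filter_fst_grid_stage[OF assms] sum_list_stage_count[OF assms]
  by (simp add: grid_word_def filter_concat o_def concat_map_replicate)

lemma concat_cyclic_after:
  "concat (map (\<lambda>s. s # (if Suc s < n then cyclic_after n s else [])) [0..<n])
     = concat (replicate n [0..<n])"
proof -
  let ?g = "\<lambda>s. s # cyclic_after n s"
  have prefix: "concat (map ?g [0..<k]) @ [k..<n] = concat (replicate (Suc k) [0..<n])" if "k < n" for k
    using that
  proof (induction k)
    case (Suc k)
    have "concat (map ?g [0..<Suc k]) = concat (map ?g [0..<k]) @ k # [Suc k..<n] @ [0..<Suc k]"
      by (simp add: cyclic_after_def)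
    moreover have "[k..<n] = k # [Suc k..<n]" using Suc.prems by (simp add: upt_conv_Cons)
    ultimately have "concat (map ?g [0..<Suc k]) @ [Suc k..<n]
        = (concat (map ?g [0..<k]) @ [k..<n]) @ [0..<Suc k] @ [Suc k..<n]"
      by simp
    also have "\<dots> = concat (replicate (Suc k) [0..<n]) @ [0..<n]"
      using Suc upt_add_eq_append[of 0 "Suc k" "n - Suc k"] by (simp del: upt_Suc)
    finally show ?case
      by (metis append_Nil2 concat.simps concat_append replicate_Suc replicate_append_same)
  qed simp
  let ?h = "\<lambda>s. s # (if Suc s < n then cyclic_after n s else [])"
  show ?thesis
  proof (cases n)
    case (Suc n')
    then have "concat (map ?h [0..<n]) = concat (map ?h [0..<n']) @ [n']" by simp
    also have "map ?h [0..<n'] = map ?g [0..<n']" using Suc by (intro map_cong) auto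
    also have "[n'] = [n'..<n]" using Suc by simp
    finally show ?thesis using prefix[of n'] Suc by simp
  qed simp
qed

lemma filter_snd_grid_stage:
  assumes "a < m"
  shows "filter (\<lambda>z. snd z = a) (grid_stage n m s)
           = map (\<lambda>j. (j, a)) (s # (if Suc s < n then cyclic_after n s else []))"
proof -
  have "filter (\<lambda>z. snd z = a) (grid_col n m s)
      = concat (map (\<lambda>b. if b = a then map (\<lambda>j. (j, a)) (cyclic_after n s) else []) [0..<m])"
    unfolding grid_col_def filter_concat map_map
    by (intro arg_cong[where f = concat] map_cong) (auto simp: filter_map o_def)
  also have "\<dots> = map (\<lambda>j. (j, a)) (cyclic_after n s)"
    using assms by (simp add: concat_map_if_eq count_list_distinct)
  finally show ?thesis
    using assms filter_eq_singleton[of "[0..<m]" a] by (simp add: grid_stage_def filter_map o_def)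
qed

lemma filter_snd_grid_word:
  assumes "a < m"
  shows "filter (\<lambda>z. snd z = a) (grid_word n m) = concat (replicate n (map (\<lambda>j. (j, a)) [0..<n]))"
proof -
  have "filter (\<lambda>z. snd z = a) (grid_word n m)
      = map (\<lambda>j. (j, a)) (concat (map (\<lambda>s. s # (if Suc s < n then cyclic_after n s else [])) [0..<n]))"
    using filter_snd_grid_stage[OF assms] by (simp add: grid_word_def filter_concat map_concat o_def)
  then show ?thesis by (simp add: concat_cyclic_after map_concat)
qed

lemma count_list_grid_word:
  assumes "i < n" "a < m"
  shows "count_list (grid_word n m) (i, a) = n"
proof -
  have "count_list (grid_word n m) (i, a) = count_list (filter (\<lambda>z. fst z = i) (grid_word n m)) (i, a)"
    by (simp add: count_list_filter)
  also have "\<dots> = n"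
    using assms
    by (simp add: filter_fst_grid_word count_list_concat_replicate count_list_distinct distinct_map inj_on_def)
  finally show ?thesis .
qed

lemma filter_grid_word_same_row:
  assumes "i < n" "a < b" "b < m"
  shows "filter (\<lambda>z. z = (i, a) \<or> z = (i, b)) (grid_word n m) = alt_word (i, a) (i, b) (2 * n)"
proof -
  let ?R = "map (Pair i) [0..<m]"
  have "filter (\<lambda>z. z = (i, a) \<or> z = (i, b)) (grid_word n m)
      = filter (\<lambda>z. z = ?R ! a \<or> z = ?R ! b) (filter (\<lambda>z. fst z = i) (grid_word n m))"
    using assms by (auto simp: filter_filter intro: filter_cong)
  also have "\<dots> = alt_word (?R ! a) (?R ! b) (2 * n)"
    unfolding filter_fst_grid_word[OF assms(1)]
    using assms by (intro filter_nth_pair_concat_replicate) (auto simp: distinct_map inj_on_def)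
  finally show ?thesis using assms by simp
qed

lemma filter_grid_word_same_column:
  assumes "a < m" "i < i'" "i' < n"
  shows "filter (\<lambda>z. z = (i, a) \<or> z = (i', a)) (grid_word n m) = alt_word (i, a) (i', a) (2 * n)"
proof -
  let ?C = "map (\<lambda>j. (j, a)) [0..<n]"
  have "filter (\<lambda>z. z = (i, a) \<or> z = (i', a)) (grid_word n m)
      = filter (\<lambda>z. z = ?C ! i \<or> z = ?C ! i') (filter (\<lambda>z. snd z = a) (grid_word n m))"
    using assms by (auto simp: filter_filter intro: filter_cong)
  also have "\<dots> = alt_word (?C ! i) (?C ! i') (2 * n)"
    unfolding filter_snd_grid_word[OF assms(1)]
    using assms by (intro filter_nth_pair_concat_replicate) (auto simp: distinct_map inj_on_def)
  finally show ?thesis using assms by simp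
qed

lemma filter_grid_stage_diagonal:
  assumes "i < i'" "i' < n" "a < a'" "a' < m"
  shows "filter (\<lambda>z. z = (i, a) \<or> z = (i', a')) (grid_stage n m i) = [(i, a), (i, a), (i', a')]"
proof -
  let ?Q = "\<lambda>z. z = (i, a) \<or> z = (i', a')"
  have "filter (\<lambda>b. b = a \<or> b = a') [0..<m] = [a, a']"
    using filter_nth_pair[of "[0..<m]" a a'] assms by simp
  moreover have "map (\<lambda>j. (j, b)) (filter (\<lambda>j. ?Q (j, b)) (cyclic_after n i))
      = (if b = a then [(i, a)] else if b = a' then [(i', a')] else [])" for b
  proof -
    have "filter (\<lambda>j. j = k) (cyclic_after n i) = [k]" if "k < n" for k
      using that assms by (intro filter_eq_singleton) (auto simp: distinct_cyclic_after set_cyclic_after)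
    then show ?thesis using assms by (auto simp: filter_empty_conv)
  qed
  ultimately have "filter ?Q (grid_col n m i) = [(i, a), (i', a')]"
    unfolding grid_col_def filter_concat map_map o_def filter_map
    using assms by (simp add: concat_map_if_pair)
  moreover have "filter ?Q (map (Pair i) [0..<m]) = [(i, a)]"
    using assms filter_eq_singleton[of "[0..<m]" a] by (simp add: filter_map o_def)
  ultimately show ?thesis using assms by (simp add: grid_stage_def)
qed

lemma not_no_adj_repeat_grid_word_diagonal:
  assumes "i < i'" "i' < n" "a < a'" "a' < m"
  shows "\<not> no_adj_repeat (filter (\<lambda>z. z = (i, a) \<or> z = (i', a')) (grid_word n m))"
proof -
  have "[0..<n] = [0..<i] @ i # [Suc i..<n]"
    using assms upt_add_eq_append[of 0 i "n - i"] by (simp add: upt_conv_Cons)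
  then show ?thesis
    using filter_grid_stage_diagonal[OF assms]
    by (simp add: grid_word_def filter_concat no_adj_repeat_append)
qed

section \<open>The product word\<close>

definition product_word :: "'a list \<Rightarrow> 'b list \<Rightarrow> ('a \<times> 'b) list" where
  "product_word w1 w2 =
     blowup w1 (remdups w2)
     @ map (\<lambda>(i, a). (remdups w1 ! i, remdups w2 ! a))
         (grid_word (length (remdups w1)) (length (remdups w2)))
     @ map prod.swap (blowup w2 (remdups w1))"

locale product_representation =
  fixes VG :: "'a set" and EG :: "'a \<Rightarrow> 'a \<Rightarrow> bool"
    and VH :: "'b set" and EH :: "'b \<Rightarrow> 'b \<Rightarrow> bool"
    and w1 :: "'a list" and w2 :: "'b list" and k1 k2 :: nat
  assumes simple_G: "simple_graph VG EG" and simple_H: "simple_graph VH EH"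
    and uniform_w1: "uniform k1 w1" and represents_w1: "represents w1 VG EG"
    and uniform_w2: "uniform k2 w2" and represents_w2: "represents w2 VH EH"
begin

abbreviation "P1 \<equiv> remdups w1"
abbreviation "P2 \<equiv> remdups w2"
abbreviation "n \<equiv> length P1"
abbreviation "m \<equiv> length P2"
abbreviation "W \<equiv> product_word w1 w2"

definition vtx :: "nat \<times> nat \<Rightarrow> 'a \<times> 'b" where
  "vtx = (\<lambda>(i, a). (P1 ! i, P2 ! a))"

lemma set_w1 [simp]: "set w1 = VG" and set_w2 [simp]: "set w2 = VH"
  using represents_w1 represents_w2 by (simp_all add: represents_def)

lemma nth_P1_in: "i < n \<Longrightarrow> P1 ! i \<in> VG" and nth_P2_in: "a < m \<Longrightarrow> P2 ! a \<in> VH"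
  using nth_mem[of i P1] nth_mem[of a P2] by simp_all

lemma count_w1: "u \<in> VG \<Longrightarrow> count_list w1 u = k1"
  and count_w2: "v \<in> VH \<Longrightarrow> count_list w2 v = k2"
  using uniform_w1 uniform_w2 by (auto simp: uniform_def)

lemma k1_pos: "u \<in> VG \<Longrightarrow> 0 < k1" and k2_pos: "v \<in> VH \<Longrightarrow> 0 < k2"
  by (metis count_w1 count_list_0_iff gr0I set_w1) (metis count_w2 count_list_0_iff gr0I set_w2)

lemma vtx_Pair [simp]: "vtx (i, a) = (P1 ! i, P2 ! a)"
  by (simp add: vtx_def)

lemma inj_on_vtx: "inj_on vtx ({..<n} \<times> {..<m})"
  by (auto simp: inj_on_def vtx_def nth_eq_iff_index_eq)

lemma vtx_surj:
  assumes "z \<in> VG \<times> VH"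
  obtains i a where "i < n" "a < m" "z = vtx (i, a)"
proof -
  obtain u v where z: "z = (u, v)" "u \<in> set P1" "v \<in> set P2" using assms by auto
  then obtain i a where "i < n" "P1 ! i = u" "a < m" "P2 ! a = v" by (metis in_set_conv_nth)
  then show ?thesis using that z by (simp add: vtx_def)
qed

lemma set_product_word: "set W = VG \<times> VH"
proof -
  have "set (map vtx (grid_word n m)) \<subseteq> VG \<times> VH"
  proof
    fix z assume "z \<in> set (map vtx (grid_word n m))"
    then obtain i a where "(i, a) \<in> set (grid_word n m)" "z = vtx (i, a)" by auto
    moreover from this have "i < n" "a < m" using set_grid_word by blast+
    ultimately show "z \<in> VG \<times> VH"
      using nth_P1_in nth_P2_in by (simp add: vtx_def)
  qed
  then show ?thesis by (auto simp: product_word_def vtx_def[symmetric])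
qed

lemma count_list_map_vtx_grid_word:
  assumes "i < n" "a < m"
  shows "count_list (map vtx (grid_word n m)) (vtx (i, a)) = n"
proof -
  have "(i, a) \<in> set (grid_word n m)"
    using count_list_grid_word[OF assms] assms(1) by (metis count_notin not_less0)
  then show ?thesis
    using count_list_inj_map[OF inj_on_subset[OF inj_on_vtx set_grid_word]] count_list_grid_word[OF assms]
    by (simp del: vtx_Pair)
qed

lemma uniform_product_word: "uniform (k1 + k2 + card VG) W"
  unfolding uniform_def set_product_word
proof
  fix z assume "z \<in> VG \<times> VH"
  then obtain i a where ia: "i < n" "a < m" "z = vtx (i, a)" by (rule vtx_surj)
  then have uv: "P1 ! i \<in> VG" "P2 ! a \<in> VH" using nth_P1_in nth_P2_in by blast+
  have "count_list (map prod.swap (blowup w2 P1)) (P1 ! i, P2 ! a) = count_list (blowup w2 P1) (P2 ! a, P1 ! i)"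
    using count_list_map_conv[of prod.swap _ "(P2 ! a, P1 ! i)"] by simp
  moreover have "n = card VG" by (metis length_remdups_card_conv set_w1)
  ultimately show "count_list W z = k1 + k2 + card VG"
    using ia uv count_list_map_vtx_grid_word[OF ia(1,2)] count_w1 count_w2
    by (simp add: product_word_def vtx_def[symmetric] count_list_blowup)
qed

lemma filter_map_vtx_grid_word:
  assumes "i < n" "i' < n" "a < m" "a' < m"
  shows "filter (\<lambda>z. z = vtx (i, a) \<or> z = vtx (i', a')) (map vtx (grid_word n m))
           = map vtx (filter (\<lambda>z. z = (i, a) \<or> z = (i', a')) (grid_word n m))"
proof -
  have "filter (\<lambda>z. vtx z = vtx (i, a) \<or> vtx z = vtx (i', a')) (grid_word n m)
      = filter (\<lambda>z. z = (i, a) \<or> z = (i', a')) (grid_word n m)"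
    using inj_on_vtx set_grid_word assms by (intro filter_cong) (auto simp: inj_on_def subset_iff)
  then show ?thesis by (simp add: filter_map o_def)
qed

lemma filter_product_word:
  assumes "i < n" "i' < n" "a < m" "a' < m"
  shows "filter (\<lambda>z. z = vtx (i, a) \<or> z = vtx (i', a')) W =
           filter (\<lambda>z. z = (P1 ! i, P2 ! a) \<or> z = (P1 ! i', P2 ! a')) (blowup w1 P2)
           @ map vtx (filter (\<lambda>z. z = (i, a) \<or> z = (i', a')) (grid_word n m))
           @ map prod.swap (filter (\<lambda>z. z = (P2 ! a, P1 ! i) \<or> z = (P2 ! a', P1 ! i')) (blowup w2 P1))"
proof -
  have "filter (\<lambda>z. prod.swap z = (P1 ! i, P2 ! a) \<or> prod.swap z = (P1 ! i', P2 ! a')) xs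
      = filter (\<lambda>z. z = (P2 ! a, P1 ! i) \<or> z = (P2 ! a', P1 ! i')) xs" for xs
    by (intro filter_cong) auto
  then show ?thesis
    using filter_map_vtx_grid_word[OF assms] assms
    by (simp add: product_word_def vtx_def[symmetric] filter_map o_def)
qed

lemma alternate_product_word_same_row:
  assumes "i < n" "a < a'" "a' < m"
  shows "alternate W (vtx (i, a)) (vtx (i, a')) \<longleftrightarrow> EH (P2 ! a) (P2 ! a')"
proof -
  define u v v' where "u = P1 ! i" "v = P2 ! a" "v' = P2 ! a'"
  have u: "u \<in> set P1" and v: "v \<in> set P2" "v' \<in> set P2" and "v \<noteq> v'"
    using assms nth_P1_in nth_P2_in by (auto simp: u_v_v'_def nth_eq_iff_index_eq)
  have x: "vtx (i, a) = (u, v)" and y: "vtx (i, a') = (u, v')"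
    using assms by (simp_all add: u_v_v'_def)
  let ?F3 = "map prod.swap (filter (\<lambda>z. z = (v, u) \<or> z = (v', u)) (blowup w2 P1))"
  have "filter (\<lambda>z. z = (u, v) \<or> z = (u, v')) (blowup w1 P2) = alt_word (u, v) (u, v') (2 * k1)"
    using filter_blowup_same_letter[of P2 a a' u w1] assms count_w1 u by (simp add: u_v_v'_def)
  moreover have "map vtx (filter (\<lambda>z. z = (i, a) \<or> z = (i, a')) (grid_word n m))
      = alt_word (u, v) (u, v') (2 * n)"
    using assms filter_grid_word_same_row[of i n a a' m] x y by (simp add: map_alt_word)
  ultimately have split: "filter (\<lambda>z. z = (u, v) \<or> z = (u, v')) W
      = alt_word (u, v) (u, v') (2 * k1) @ alt_word (u, v) (u, v') (2 * n) @ ?F3"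
    using filter_product_word[of i i a a'] assms x y by (simp add: u_v_v'_def)
  have F3: "no_adj_repeat ?F3 \<longleftrightarrow> EH v v'"
    using no_adj_repeat_filter_blowup[of P1 u u v v' w2] u v \<open>v \<noteq> v'\<close> represents_w2
    by (simp add: no_adj_repeat_map represents_def)
  show ?thesis
  proof (cases "EH v v'")
    case True
    then have "alternate w2 v v'" using represents_w2 v \<open>v \<noteq> v'\<close> by (simp add: represents_def)
    then have "?F3 = alt_word (u, v) (u, v') (2 * k2)"
      using filter_blowup_uniform_alternate[OF _ u u uniform_w2 _ assms(2,3)] u_v_v'_def
      by (simp add: map_alt_word)
    then show ?thesis
      using True split x y no_adj_repeat_alt_word_append3[of "(u, v)" "(u, v')"] \<open>v \<noteq> v'\<close>
      by (simp add: alternate_def u_v_v'_def[symmetric])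
  next
    case False
    then show ?thesis
      using split x y F3 by (auto simp: alternate_def u_v_v'_def[symmetric] dest: no_adj_repeat_append3)
  qed
qed

lemma alternate_product_word_same_column:
  assumes "i < i'" "i' < n" "a < m"
  shows "alternate W (vtx (i, a)) (vtx (i', a)) \<longleftrightarrow> EG (P1 ! i) (P1 ! i')"
proof -
  define u u' v where "u = P1 ! i" "u' = P1 ! i'" "v = P2 ! a"
  have u: "u \<in> set P1" "u' \<in> set P1" and v: "v \<in> set P2" and "u \<noteq> u'"
    using assms nth_P1_in nth_P2_in by (auto simp: u_u'_v_def nth_eq_iff_index_eq)
  have x: "vtx (i, a) = (u, v)" and y: "vtx (i', a) = (u', v)"
    using assms by (simp_all add: u_u'_v_def)
  let ?F1 = "filter (\<lambda>z. z = (u, v) \<or> z = (u', v)) (blowup w1 P2)"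
  have "map vtx (filter (\<lambda>z. z = (i, a) \<or> z = (i', a)) (grid_word n m)) = alt_word (u, v) (u', v) (2 * n)"
    using assms filter_grid_word_same_column[of a m i i' n] x y by (simp add: map_alt_word)
  moreover have "filter (\<lambda>z. z = (v, u) \<or> z = (v, u')) (blowup w2 P1) = alt_word (v, u) (v, u') (2 * k2)"
    using filter_blowup_same_letter[of P1 i i' v w2] assms count_w2 v by (simp add: u_u'_v_def)
  ultimately have split: "filter (\<lambda>z. z = (u, v) \<or> z = (u', v)) W
      = ?F1 @ alt_word (u, v) (u', v) (2 * n) @ alt_word (u, v) (u', v) (2 * k2)"
    using filter_product_word[of i i' a a] assms x y by (simp add: u_u'_v_def map_alt_word)
  have F1: "no_adj_repeat ?F1 \<longleftrightarrow> EG u u'"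
    using no_adj_repeat_filter_blowup[of P2 v v u u' w1] u v \<open>u \<noteq> u'\<close> represents_w1
    by (simp add: represents_def)
  show ?thesis
  proof (cases "EG u u'")
    case True
    then have "alternate w1 u u'" using represents_w1 u \<open>u \<noteq> u'\<close> by (simp add: represents_def)
    then have "?F1 = alt_word (u, v) (u', v) (2 * k1)"
      using filter_blowup_uniform_alternate[OF _ v v uniform_w1 _ assms(1,2)] u_u'_v_def by simp
    then show ?thesis
      using True split x y no_adj_repeat_alt_word_append3[of "(u, v)" "(u', v)"] \<open>u \<noteq> u'\<close>
      by (simp add: alternate_def u_u'_v_def[symmetric])
  next
    case False
    then show ?thesis
      using split x y F1 by (auto simp: alternate_def u_u'_v_def[symmetric] dest: no_adj_repeat_append3)
  qed
qed

lemma not_alternate_product_word_increasing: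
  assumes "i < i'" "i' < n" "a < a'" "a' < m"
  shows "\<not> alternate W (vtx (i, a)) (vtx (i', a'))"
proof
  let ?G = "filter (\<lambda>z. z = (i, a) \<or> z = (i', a')) (grid_word n m)"
  assume "alternate W (vtx (i, a)) (vtx (i', a'))"
  then have "no_adj_repeat (map vtx ?G)"
    using filter_product_word[of i i' a a'] assms by (simp add: alternate_def no_adj_repeat_append)
  moreover have "set ?G \<subseteq> {..<n} \<times> {..<m}" using set_grid_word by fastforce
  ultimately have "no_adj_repeat ?G" using no_adj_repeat_map[OF inj_on_subset[OF inj_on_vtx]] by simp
  then show False using not_no_adj_repeat_grid_word_diagonal[OF assms] by simp
qed

lemma not_alternate_product_word_decreasing:
  assumes "i < i'" "i' < n" "a' < a" "a < m"
  shows "\<not> alternate W (vtx (i, a)) (vtx (i', a'))"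
proof
  define u u' v v' where "u = P1 ! i" "u' = P1 ! i'" "v = P2 ! a" "v' = P2 ! a'"
  have u: "u \<in> set P1" "u' \<in> set P1" and v: "v \<in> set P2" "v' \<in> set P2"
    and "u \<noteq> u'" "v \<noteq> v'"
    using assms nth_P1_in nth_P2_in by (auto simp: u_u'_v_v'_def nth_eq_iff_index_eq)
  define x y where "x = vtx (i, a)" "y = vtx (i', a')"
  have xy: "x = (u, v)" "y = (u', v')" using assms by (simp_all add: x_y_def u_u'_v_v'_def)
  let ?F1 = "filter (\<lambda>z. z = x \<or> z = y) (blowup w1 P2)"
  let ?F2 = "filter (\<lambda>z. z = x \<or> z = y) (map vtx (grid_word n m))"
  let ?F3 = "map prod.swap (filter (\<lambda>z. z = (v', u') \<or> z = (v, u)) (blowup w2 P1))"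
  have "filter (\<lambda>z. z = (v, u) \<or> z = (v', u')) (blowup w2 P1)
      = filter (\<lambda>z. z = (v', u') \<or> z = (v, u)) (blowup w2 P1)"
    by (intro filter_cong) auto
  then have split: "filter (\<lambda>z. z = x \<or> z = y) W = ?F1 @ ?F2 @ ?F3"
    using filter_product_word[of i i' a a'] filter_map_vtx_grid_word[of i i' a a'] assms
    by (simp add: x_y_def u_u'_v_v'_def)
  assume "alternate W x y"
  then have "no_adj_repeat ?F1" "no_adj_repeat ?F3"
    using split by (simp_all add: alternate_def no_adj_repeat_append)
  then have "alternate w1 u u'" "alternate w2 v' v"
    using no_adj_repeat_filter_blowup[of P2 v v' u u' w1] no_adj_repeat_filter_blowup[of P1 u' u v' v w2]
      u v \<open>u \<noteq> u'\<close> \<open>v \<noteq> v'\<close> xy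
    by (simp_all add: no_adj_repeat_map)
  then have F1: "?F1 = alt_word x y (2 * k1)" and F3: "?F3 = alt_word y x (2 * k2)"
    using filter_blowup_uniform_alternate[OF _ v uniform_w1 _ assms(1,2)]
      filter_blowup_uniform_alternate[OF _ u(2,1) uniform_w2 _ assms(3) _] assms u_u'_v_v'_def xy
    by (simp_all add: map_alt_word)
  have "count_list ?F2 x = count_list ?F2 y"
    using count_list_map_vtx_grid_word assms by (simp add: x_y_def count_list_filter)
  moreover have "x \<noteq> y" using xy \<open>u \<noteq> u'\<close> by simp
  moreover have "0 < k1" "0 < k2" using k1_pos[of u] k2_pos[of v] u v by simp_all
  ultimately have "\<not> no_adj_repeat (alt_word x y (2 * k1) @ ?F2 @ alt_word y x (2 * k2))"
    by (intro not_no_adj_repeat_opposite_ends) auto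
  then show False using \<open>alternate W x y\<close> split F1 F3 by (simp add: alternate_def)
qed

lemma alternate_product_word_iff_cart_E:
  assumes "i < n" "i' < n" "a < m" "a' < m" "i < i' \<or> i = i' \<and> a < a'"
  shows "alternate W (vtx (i, a)) (vtx (i', a')) \<longleftrightarrow> cart_E EG EH (vtx (i, a)) (vtx (i', a'))"
proof -
  have irrefl: "\<not> EG u u" "\<not> EH v v" for u v
    using simple_G simple_H by (simp_all add: simple_graph_def)
  have ne: "P1 ! i \<noteq> P1 ! i'" if "i \<noteq> i'"
    using assms that by (simp add: nth_eq_iff_index_eq)
  have ne': "P2 ! a \<noteq> P2 ! a'" if "a \<noteq> a'"
    using assms that by (simp add: nth_eq_iff_index_eq)
  consider "i = i'" "a < a'" | "i < i'" "a = a'" | "i < i'" "a < a'" | "i < i'" "a' < a"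
    using assms(5) by (metis linorder_neqE_nat)
  then show ?thesis
  proof cases
    case 1
    then show ?thesis
      using alternate_product_word_same_row[of i a a'] assms irrefl by (simp add: cart_E_def)
  next
    case 2
    then show ?thesis
      using alternate_product_word_same_column[of i i' a] assms irrefl ne by (simp add: cart_E_def)
  next
    case 3
    then show ?thesis
      using not_alternate_product_word_increasing[of i i' a a'] assms ne ne' by (simp add: cart_E_def)
  next
    case 4
    then show ?thesis
      using not_alternate_product_word_decreasing[of i i' a' a] assms ne ne' by (simp add: cart_E_def)
  qed
qed

lemma represents_product_word: "represents W (cart_V VG VH) (cart_E EG EH)"
  unfolding represents_def cart_V_def
proof (intro conjI ballI impI)
  show "set W = VG \<times> VH" by (rule set_product_word)
  have sym: "cart_E EG EH x y \<longleftrightarrow> cart_E EG EH y x" for x y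
    using simple_G simple_H unfolding simple_graph_def cart_E_def by (cases x; cases y) blast
  fix x y assume "x \<in> VG \<times> VH" "y \<in> VG \<times> VH" "x \<noteq> y"
  moreover obtain i a where "i < n" "a < m" "x = vtx (i, a)" using \<open>x \<in> VG \<times> VH\<close> by (rule vtx_surj)
  moreover obtain i' a' where "i' < n" "a' < m" "y = vtx (i', a')" using \<open>y \<in> VG \<times> VH\<close> by (rule vtx_surj)
  ultimately consider "i < i' \<or> i = i' \<and> a < a'" | "i' < i \<or> i' = i \<and> a' < a"
    by (metis linorder_neqE_nat)
  then show "cart_E EG EH x y \<longleftrightarrow> alternate W x y"
  proof cases
    case 1
    then show ?thesis
      using alternate_product_word_iff_cart_E[of i i' a a'] \<open>i < n\<close> \<open>a < m\<close> \<open>x = vtx (i, a)\<close>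
        \<open>i' < n\<close> \<open>a' < m\<close> \<open>y = vtx (i', a')\<close>
      by simp
  next
    case 2
    then have "alternate W y x \<longleftrightarrow> cart_E EG EH y x"
      using alternate_product_word_iff_cart_E[of i' i a' a] \<open>i < n\<close> \<open>a < m\<close> \<open>x = vtx (i, a)\<close>
        \<open>i' < n\<close> \<open>a' < m\<close> \<open>y = vtx (i', a')\<close>
      by simp
    then show ?thesis using alternate_commute[of W x y] sym[of x y] by simp
  qed
qed

end

lemma k_representable_cart_product:
  assumes "simple_graph VG EG" "simple_graph VH EH"
    and "uniform k1 w1" "represents w1 VG EG" "uniform k2 w2" "represents w2 VH EH"
  shows "k_representable (k1 + k2 + card VG) (cart_V VG VH) (cart_E EG EH)"
proof -
  interpret product_representation VG EG VH EH w1 w2 k1 k2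
    using assms by unfold_locales
  show ?thesis
    unfolding k_representable_def using uniform_product_word represents_product_word by blast
qed

lemma k_representable_cart_commute:
  assumes "k_representable k (cart_V VH VG) (cart_E EH EG)"
  shows "k_representable k (cart_V VG VH) (cart_E EG EH)"
proof -
  obtain w where "uniform k w" "represents w (cart_V VH VG) (cart_E EH EG)"
    using assms unfolding k_representable_def by blast
  moreover have "count_list (map prod.swap w) (prod.swap z) = count_list w z" for z
    by (rule count_list_map_conv) simp
  moreover have "alternate (map prod.swap w) x y \<longleftrightarrow> alternate w (prod.swap x) (prod.swap y)" for x y
  proof -
    have "filter (\<lambda>z. z = x \<or> z = y) (map prod.swap w)
        = map prod.swap (filter (\<lambda>z. z = prod.swap x \<or> z = prod.swap y) w)"
      by (auto simp: filter_map o_def intro: filter_cong)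
    then show ?thesis by (simp add: alternate_def no_adj_repeat_map)
  qed
  moreover have "cart_E EG EH x y \<longleftrightarrow> cart_E EH EG (prod.swap x) (prod.swap y)" for x y
    by (cases x; cases y) (auto simp: cart_E_def)
  ultimately have "uniform k (map prod.swap w) \<and> represents (map prod.swap w) (cart_V VG VH) (cart_E EG EH)"
    by (auto simp: uniform_def represents_def cart_V_def)
  then show ?thesis unfolding k_representable_def by blast
qed

theorem mainTheorem8:
  fixes VG :: "'a set" and EG :: "'a \<Rightarrow> 'a \<Rightarrow> bool"
    and VH :: "'b set" and EH :: "'b \<Rightarrow> 'b \<Rightarrow> bool"
  assumes "simple_graph VG EG" and "simple_graph VH EH"
    and "word_representable VG EG" and "word_representable VH EH"
  shows "k_representable
           (representation_number VG EG + representation_number VH EH + min (card VG) (card VH))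
           (cart_V VG VH) (cart_E EG EH)"
proof -
  let ?k1 = "representation_number VG EG" and ?k2 = "representation_number VH EH"
  obtain w1 w2 where w1: "uniform ?k1 w1" "represents w1 VG EG" and w2: "uniform ?k2 w2" "represents w2 VH EH"
    using k_representable_representation_number[OF assms(3)] k_representable_representation_number[OF assms(4)]
    unfolding k_representable_def by blast
  show ?thesis
  proof (cases "card VG \<le> card VH")
    case True
    then show ?thesis using k_representable_cart_product[OF assms(1,2) w1 w2] by simp
  next
    case False
    then show ?thesis
      using k_representable_cart_commute[OF k_representable_cart_product[OF assms(2,1) w2 w1]]
      by (simp add: add.commute)
  qed
qed

end
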